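(* Let $\mathbf{X}=[\mathbf{x}_1,\dots,\mathbf{x}_T]\in\mathbb{R}^{N\times T}$ be a dataset and $\boldsymbol{\Pi}\in\mathbb{R}^{N\times N}$ a permutation matrix, and set $\bar{\mathbf{X}}=\boldsymbol{\Pi}\mathbf{X}$. Let $\Phi$ denote the covariance scattering transform (CST) built from $\mathbf{X}$ and $\bar\Phi$ the CST built from $\bar{\mathbf{X}}$, both with the same wavelet functions $h_0,\dots,h_{J-1}$, the same number of layers $L$, the same nonlinearity $\rho$, the same choice of operator type and the same map $U$ (see context). Then for every signal $\mathbf{x}\in\mathbb{R}^N$: (i) if $U:\mathbb{R}^N\to\mathbb{R}^N$ is permutation equivariant, i.e. $U(\boldsymbol{\Pi}\mathbf{y})=\boldsymbol{\Pi}U(\mathbf{y})$ for all $\mathbf{y}$ and all permutation matrices $\boldsymbol{\Pi}$ (e.g. the identity), then $\bar\Phi(\boldsymbol{\Pi}\mathbf{x})=\operatorname{Perm}(\Phi(\mathbf{x}),\boldsymbol{\Pi})$; (ii) if $U$ is permutation invariant, i.e. $U(\boldsymbol{\Pi}\mathbf{y})=U(\mathbf{y})$ for all $\mathbf{y}$ and all permutation matrices (e.g. the average $U(\mathbf{y})=\frac1N\mathbf{1}^\top\mathbf{y}$), then $\bar\Phi(\boldsymbol{\Pi}\mathbf{x})=\Phi(\mathbf{x})$.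
   Context: For a dataset $\mathbf{X}=[\mathbf{x}_1,\dots,\mathbf{x}_T]$, the sample mean is $\hat{\boldsymbol\mu}=\frac1T\sum_t\mathbf{x}_t$ and the sample covariance is $\hat{\mathbf{C}}=\frac1T\sum_{t=1}^T(\mathbf{x}_t-\hat{\boldsymbol\mu})(\mathbf{x}_t-\hat{\boldsymbol\mu})^\top$, with largest eigenvalue $\hat w_1>0$. Fix $\gamma>0$. The covariance wavelet operator is either $\hat{\mathbf{T}}=\gamma\hat{\mathbf{C}}/\hat w_1$ or $\hat{\mathbf{T}}=\gamma(\mathbf{I}-\hat{\mathbf{C}}/\hat w_1)$ (the same choice is made for both datasets). For a symmetric matrix $\mathbf{T}=\mathbf{V}\boldsymbol\Lambda\mathbf{V}^\top$ with eigenvalues $\lambda_1,\dots,\lambda_N$ and a fixed function $h:\mathbb{R}\to\mathbb{R}$, the covariance wavelet is $\mathbf{H}(\mathbf{T})=\mathbf{V}\operatorname{diag}(h(\lambda_1),\dots,h(\lambda_N))\mathbf{V}^\top$. Given fixed wavelet functions $h_0,\dots,h_{J-1}$ (not depending on the data), write $\mathbf{H}_j=\mathbf{H}_j(\hat{\mathbf{T}})$. With $\rho:\mathbb{R}\to\mathbb{R}$ applied entrywise, the scattering features of a signal $\mathbf{x}$ are defined recursively by $\mathbf{x}_{()}=\mathbf{x}$ and $\mathbf{x}_{(j_\ell,\dots,j_1)}=\rho(\mathbf{H}_{j_\ell}\mathbf{x}_{(j_{\ell-1},\dots,j_1)})$ for $j_i\in\{0,\dots,J-1\}$, i.e. $\mathbf{x}_{(j_\ell,\dots,j_1)}=\rho(\mathbf{H}_{j_\ell}\rho(\mathbf{H}_{j_{\ell-1}}\cdots\rho(\mathbf{H}_{j_1}\mathbf{x})))$.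 The CST $\Phi(\mathbf{x})$ is the concatenation (in a fixed order of index tuples) of $U\mathbf{x}_{(j_\ell,\dots,j_1)}$ over all layers $\ell=0,\dots,L-1$ and all tuples $(j_\ell,\dots,j_1)\in\{0,\dots,J-1\}^\ell$. When $U$ maps $\mathbb{R}^N$ to $\mathbb{R}^N$, the CST permutation operator is $\operatorname{Perm}(\Phi(\mathbf{x}),\boldsymbol\Pi)=[\boldsymbol\Pi U\mathbf{x}\,\|\,\boldsymbol\Pi U\mathbf{x}_{(0)}\,\|\cdots]$, i.e. each concatenated block $U\mathbf{x}_{(j_\ell,\dots,j_1)}$ is replaced by $\boldsymbol\Pi U\mathbf{x}_{(j_\ell,\dots,j_1)}$. *)

theory Defs
  imports "HOL-Analysis.Analysis"
begin

definition perm_matrix :: "('n::finite \<Rightarrow> 'n) \<Rightarrow> real^'n^'n" where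
  "perm_matrix p = (\<chi> i j. if i = p j then 1 else 0)"

definition is_permutation_matrix :: "real^'n::finite^'n \<Rightarrow> bool" where
  "is_permutation_matrix P \<longleftrightarrow> (\<exists>p. p permutes (UNIV :: 'n set) \<and> P = perm_matrix p)"

definition sample_mean :: "real^'t::finite^'n::finite \<Rightarrow> real^'n" where
  "sample_mean X = (1 / real CARD('t)) *\<^sub>R (\<Sum>t\<in>UNIV. column t X)"

definition outer :: "real^'n::finite \<Rightarrow> real^'n \<Rightarrow> real^'n^'n" where
  "outer u v = (\<chi> i j. u $ i * v $ j)"

definition sample_cov :: "real^'t::finite^'n::finite \<Rightarrow> real^'n^'n" where
  "sample_cov X = (1 / real CARD('t)) *\<^sub>R
     (\<Sum>t\<in>UNIV. outer (column t X - sample_mean X) (column t X - sample_mean X))"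

definition eigenvalues :: "real^'n::finite^'n \<Rightarrow> real set" where
  "eigenvalues A = {c. \<exists>v. v \<noteq> 0 \<and> A *v v = c *\<^sub>R v}"

definition largest_eigenvalue :: "real^'n::finite^'n \<Rightarrow> real" where
  "largest_eigenvalue A = Max (eigenvalues A)"

definition cov_operator :: "bool \<Rightarrow> real \<Rightarrow> real^'t::finite^'n::finite \<Rightarrow> real^'n^'n" where
  "cov_operator b \<gamma> X =
     (let C = sample_cov X; w = largest_eigenvalue C in
      if b then (\<gamma> / w) *\<^sub>R C else \<gamma> *\<^sub>R (mat 1 - (1 / w) *\<^sub>R C))"

definition diag_mat :: "('n::finite \<Rightarrow> real) \<Rightarrow> real^'n^'n" where
  "diag_mat d = (\<chi> i j. if i = j then d i else 0)"

text \<open>H(T) = V diag(h(lambda_1),...,h(lambda_N)) V^T for an eigendecomposition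
  T = V diag(lambda) V^T with V orthogonal (independent of the choice of decomposition).\<close>
definition spectral_fun :: "(real \<Rightarrow> real) \<Rightarrow> real^'n::finite^'n \<Rightarrow> real^'n^'n" where
  "spectral_fun h A = (SOME M. \<exists>V lam. orthogonal_matrix V \<and>
       A = V ** diag_mat lam ** transpose V \<and> M = V ** diag_mat (h \<circ> lam) ** transpose V)"

definition entrywise :: "(real \<Rightarrow> real) \<Rightarrow> real^'n::finite \<Rightarrow> real^'n" where
  "entrywise \<rho> v = (\<chi> i. \<rho> (v $ i))"

text \<open>Scattering feature x_(j_l,...,j_1); the tuple is the list [j_l, ..., j_1].\<close>
fun scat_feature :: "(nat \<Rightarrow> real^'n::finite^'n) \<Rightarrow> (real \<Rightarrow> real) \<Rightarrow> nat list \<Rightarrow> real^'n \<Rightarrow> real^'n" where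
  "scat_feature H \<rho> [] x = x"
| "scat_feature H \<rho> (j # js) x = entrywise \<rho> (H j *v scat_feature H \<rho> js x)"

fun tuples_len :: "nat \<Rightarrow> nat \<Rightarrow> nat list list" where
  "tuples_len J 0 = [[]]"
| "tuples_len J (Suc l) = concat (map (\<lambda>j. map (\<lambda>js. j # js) (tuples_len J l)) [0..<J])"

definition all_tuples :: "nat \<Rightarrow> nat \<Rightarrow> nat list list" where
  "all_tuples J L = concat (map (tuples_len J) [0..<L])"

definition CST :: "bool \<Rightarrow> real \<Rightarrow> real^'t::finite^'n::finite \<Rightarrow> (nat \<Rightarrow> real \<Rightarrow> real) \<Rightarrow> nat \<Rightarrow> nat
      \<Rightarrow> (real \<Rightarrow> real) \<Rightarrow> (real^'n \<Rightarrow> 'm) \<Rightarrow> real^'n \<Rightarrow> 'm list" where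
  "CST b \<gamma> X h J L \<rho> U x =
     (let H = (\<lambda>j. spectral_fun (h j) (cov_operator b \<gamma> X))
      in map (\<lambda>js. U (scat_feature H \<rho> js x)) (all_tuples J L))"

definition cst_perm :: "(real^'n::finite) list \<Rightarrow> real^'n^'n \<Rightarrow> (real^'n) list" where
  "cst_perm \<Phi> P = map (\<lambda>v. P *v v) \<Phi>"

end

theory Submission
  imports Defs
begin

text \<open>Permuting the data conjugates the sample covariance, C(\<Pi>X) = \<Pi> C(X) \<Pi>^T, and leaves its
  spectrum, hence w_1, unchanged; so the covariance operator is conjugated by \<Pi> as well.
  Spectral functions commute with orthogonal conjugation: by the spectral theorem (proved here
  variationally) T has an orthonormal eigendecomposition, \<Pi> V is one for \<Pi> T \<Pi>^T, and H(T) does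
  not depend on the decomposition chosen. Since \<Pi> also commutes with the entrywise \<rho>, every
  scattering feature of \<Pi>x for the permuted data is \<Pi> times the corresponding feature of x,
  and both claims follow by applying U.\<close>

lemma inner_symmetric_matrix:
  fixes A :: "real^'n::finite^'n"
  assumes "transpose A = A"
  shows "x \<bullet> (A *v y) = (A *v x) \<bullet> y"
  by (metis assms dot_lmul_matrix transpose_matrix_vector)

lemma quadratic_nonpos_imp_linear_coeff_zero:
  fixes a c :: real
  assumes "\<And>t. t * a + t\<^sup>2 * c \<le> 0"
  shows "a = 0"
proof -
  define e where "e = 1 / (\<bar>c\<bar> + 1)"
  have e: "e > 0" "e * \<bar>c\<bar> < 1" unfolding e_def by (auto simp: field_simps)
  have "(e * a) * a + (e * a)\<^sup>2 * c \<le> 0" by (rule assms)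
  hence "a\<^sup>2 * (e * (1 + e * c)) \<le> 0" by (simp add: power2_eq_square algebra_simps)
  moreover have "e * (1 + e * c) > 0"
    using e by (smt (verit) abs_ge_self abs_minus_cancel mult_left_mono mult_minus_right mult_pos_pos)
  ultimately have "a\<^sup>2 \<le> 0" using mult_le_cancel_right_pos[of "e * (1 + e * c)" "a\<^sup>2" 0] by simp
  thus ?thesis by simp
qed

lemma symmetric_max_quadratic_form_imp_eigenvector:
  fixes A :: "real^'n::finite^'n"
  assumes sym: "transpose A = A" and S: "subspace S" and inv: "\<And>y. y \<in> S \<Longrightarrow> A *v y \<in> S"
    and v: "v \<in> S" "v \<bullet> v = 1"
    and max: "\<And>y. y \<in> S \<Longrightarrow> y \<bullet> (A *v y) \<le> (v \<bullet> (A *v v)) * (y \<bullet> y)"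
  shows "A *v v = (v \<bullet> (A *v v)) *\<^sub>R v"
proof -
  define lam where "lam = v \<bullet> (A *v v)"
  define w where "w = A *v v - lam *\<^sub>R v"
  have wS: "w \<in> S" unfolding w_def using S v inv by (simp add: subspace_diff subspace_scale)
  have "v \<bullet> w = 0" unfolding w_def lam_def using v by (simp add: inner_diff_right)
  hence wv: "w \<bullet> v = 0" by (simp add: inner_commute)
  have "w \<bullet> w = w \<bullet> (A *v v) - lam * (w \<bullet> v)" unfolding w_def by (simp add: inner_diff_right)
  hence Av: "w \<bullet> (A *v v) = w \<bullet> w" using wv by simp
  \<comment> \<open>The residual w is orthogonal to v, so moving the maximiser along w has first variation 2 t (w \<bullet> w).\<close>
  have "2 * (w \<bullet> w) = 0"
  proof (rule quadratic_nonpos_imp_linear_coeff_zero)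
    fix t :: real
    define y where "y = v + t *\<^sub>R w"
    have "y \<bullet> (A *v y) \<le> lam * (y \<bullet> y)"
      unfolding lam_def y_def using S v wS by (intro max) (simp add: subspace_add subspace_scale)
    moreover have "y \<bullet> y = 1 + t\<^sup>2 * (w \<bullet> w)"
      unfolding y_def using v(2) wv
      by (simp add: inner_add_left inner_add_right inner_commute power2_eq_square)
    moreover have "y \<bullet> (A *v y) = lam + t * (2 * (w \<bullet> w)) + t\<^sup>2 * (w \<bullet> (A *v w))"
      unfolding y_def lam_def using inner_symmetric_matrix[OF sym, of v w] Av
      by (simp add: matrix_vector_right_distrib matrix_vector_mult_scaleR inner_add_left
          inner_add_right inner_commute power2_eq_square algebra_simps)
    ultimately show "t * (2 * (w \<bullet> w)) + t\<^sup>2 * (w \<bullet> (A *v w) - lam * (w \<bullet> w)) \<le> 0"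
      by (simp add: algebra_simps)
  qed
  thus ?thesis unfolding w_def lam_def by simp
qed

lemma symmetric_invariant_subspace_has_eigenvector:
  fixes A :: "real^'n::finite^'n"
  assumes sym: "transpose A = A" and S: "subspace S" and nz: "S \<noteq> {0}"
    and inv: "\<And>y. y \<in> S \<Longrightarrow> A *v y \<in> S"
  shows "\<exists>v\<in>S. norm v = 1 \<and> A *v v = (v \<bullet> (A *v v)) *\<^sub>R v"
proof -
  define K where "K = S \<inter> sphere 0 1"
  have "compact K" unfolding K_def by (simp add: S closed_subspace closed_Int_compact)
  moreover obtain x where "x \<in> S" "x \<noteq> 0" using nz S subspace_0 by blast
  hence "(1 / norm x) *\<^sub>R x \<in> K" unfolding K_def using S by (simp add: subspace_scale)
  hence "K \<noteq> {}" by blast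
  moreover have "continuous_on K (\<lambda>y. y \<bullet> (A *v y))"
    by (intro continuous_intros linear_continuous_on matrix_vector_mul_linear)
  ultimately obtain v where vK: "v \<in> K" and vmax: "\<And>y. y \<in> K \<Longrightarrow> y \<bullet> (A *v y) \<le> v \<bullet> (A *v v)"
    using continuous_attains_sup by metis
  have v: "v \<in> S" "norm v = 1" using vK unfolding K_def by auto
  have "y \<bullet> (A *v y) \<le> (v \<bullet> (A *v v)) * (y \<bullet> y)" if "y \<in> S" for y
  proof (cases "y = 0")
    case False
    hence "(1 / norm y) *\<^sub>R y \<in> K" unfolding K_def using S \<open>y \<in> S\<close> by (simp add: subspace_scale)
    from vmax[OF this] have "(y \<bullet> (A *v y)) / (norm y)\<^sup>2 \<le> v \<bullet> (A *v v)"
      by (simp add: matrix_vector_mult_scaleR power2_eq_square)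
    thus ?thesis using False by (simp add: divide_le_eq power2_norm_eq_inner mult.commute)
  qed simp
  hence "A *v v = (v \<bullet> (A *v v)) *\<^sub>R v"
    using v by (intro symmetric_max_quadratic_form_imp_eigenvector[OF sym S inv]) (auto simp: norm_eq_1)
  thus ?thesis using v by blast
qed

lemma symmetric_orthonormal_eigenvectors:
  fixes A :: "real^'n::finite^'n"
  assumes sym: "transpose A = A"
  shows "k \<le> CARD('n) \<Longrightarrow> \<exists>B. finite B \<and> card B = k
           \<and> (\<forall>b\<in>B. norm b = 1 \<and> (\<exists>c. A *v b = c *\<^sub>R b)) \<and> pairwise orthogonal B"
proof (induction k)
  case 0
  show ?case by (rule exI[of _ "{}"]) auto
next
  case (Suc k)
  then obtain B where B: "finite B" "card B = k" "\<forall>b\<in>B. norm b = 1 \<and> (\<exists>c. A *v b = c *\<^sub>R b)"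
      "pairwise orthogonal B" by auto
  define S where "S = {y. \<forall>b\<in>B. orthogonal b y}"
  have S: "subspace S" unfolding S_def subspace_def orthogonal_def by (auto simp: inner_add_right)
  have "0 \<notin> B" using B(3) by force
  hence "independent B" using B(4) pairwise_orthogonal_independent by blast
  hence "dim B = card B" using dim_span_eq_card_independent dim_span by metis
  hence "dim B < DIM(real^'n)" using Suc.prems B(2) by simp
  then obtain x :: "real^'n" where "x \<noteq> 0" "\<And>y. y \<in> span B \<Longrightarrow> orthogonal x y"
    using orthogonal_to_subspace_exists by blast
  hence "S \<noteq> {0}" unfolding S_def using span_base orthogonal_commute by blast
  moreover have "A *v y \<in> S" if "y \<in> S" for y
    unfolding S_def mem_Collect_eq
  proof
    fix b assume "b \<in> B"
    then obtain c where "A *v b = c *\<^sub>R b" using B(3) by blast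
    hence "b \<bullet> (A *v y) = c * (b \<bullet> y)" using inner_symmetric_matrix[OF sym, of b y] by simp
    thus "orthogonal b (A *v y)" using \<open>b \<in> B\<close> that unfolding S_def orthogonal_def by simp
  qed
  ultimately obtain v where v: "v \<in> S" "norm v = 1" "A *v v = (v \<bullet> (A *v v)) *\<^sub>R v"
    using symmetric_invariant_subspace_has_eigenvector[OF sym S] by blast
  have "v \<notin> B" using v(1,2) unfolding S_def orthogonal_def by (auto simp: norm_eq_1)
  show ?case
  proof (intro exI[of _ "insert v B"] conjI)
    show "finite (insert v B)" "card (insert v B) = Suc k" using B \<open>v \<notin> B\<close> by simp_all
    show "\<forall>b\<in>insert v B. norm b = 1 \<and> (\<exists>c. A *v b = c *\<^sub>R b)" using B(3) v by blast
    show "pairwise orthogonal (insert v B)"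
      using B(4) v(1) unfolding S_def pairwise_insert by (auto simp: orthogonal_commute)
  qed
qed

lemma diag_mat_mult_left: "(diag_mat d ** M) $ i $ j = d i * M $ i $ j"
  unfolding matrix_matrix_mult_def diag_mat_def
  by (simp add: if_distrib[where f="\<lambda>z. z * _"] sum.delta cong: if_cong)

lemma diag_mat_mult_right: "(M ** diag_mat d) $ i $ j = M $ i $ j * d j"
  unfolding matrix_matrix_mult_def diag_mat_def
  by (simp add: if_distrib[where f="\<lambda>z. _ * z"] sum.delta' cong: if_cong)

lemma orthogonal_eigenvector_matrix_diagonalizes:
  fixes A V :: "real^'n::finite^'n"
  assumes V: "orthogonal_matrix V" and eig: "\<And>j. A *v column j V = lam j *\<^sub>R column j V"
  shows "A = V ** diag_mat lam ** transpose V"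
proof -
  have "(A ** V) $ i $ j = (V ** diag_mat lam) $ i $ j" for i j
  proof -
    have "(A ** V) $ i $ j = (A *v column j V) $ i"
      by (simp add: matrix_matrix_mult_def matrix_vector_mult_def column_def)
    also have "\<dots> = lam j * V $ i $ j" unfolding eig by (simp add: column_def)
    finally show ?thesis by (simp add: diag_mat_mult_right mult.commute)
  qed
  hence "A ** V = V ** diag_mat lam" by (simp add: vec_eq_iff)
  hence "A ** (V ** transpose V) = V ** diag_mat lam ** transpose V" by (simp add: matrix_mul_assoc)
  thus ?thesis using V by (simp add: orthogonal_matrix_def)
qed

lemma symmetric_matrix_orthogonally_diagonalizable:
  fixes A :: "real^'n::finite^'n"
  assumes sym: "transpose A = A"
  shows "\<exists>V lam. orthogonal_matrix V \<and> A = V ** diag_mat lam ** transpose V"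
proof -
  obtain B where B: "finite B" "card B = CARD('n)" "\<forall>b\<in>B. norm b = 1 \<and> (\<exists>c. A *v b = c *\<^sub>R b)"
      "pairwise orthogonal B" using symmetric_orthonormal_eigenvectors[OF sym, of "CARD('n)"] by auto
  obtain g where g: "bij_betw g (UNIV :: 'n set) B"
    using finite_same_card_bij[of "UNIV :: 'n set" B] B by auto
  define V :: "real^'n^'n" where "V = (\<chi> i j. g j $ i)"
  have col: "column j V = g j" for j unfolding V_def column_def by simp
  have gB: "g j \<in> B" for j using g bij_betwE by blast
  have ginj: "g i \<noteq> g j" if "i \<noteq> j" for i j using g that unfolding bij_betw_def inj_on_def by blast
  have V: "orthogonal_matrix V" unfolding orthogonal_matrix_orthonormal_columns col
    using B(3,4) gB ginj unfolding pairwise_def by blast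
  have "\<forall>j. \<exists>c. A *v column j V = c *\<^sub>R column j V"
    unfolding col using B(3) gB by blast
  then obtain lam where "\<And>j. A *v column j V = lam j *\<^sub>R column j V" by (metis choice)
  hence "A = V ** diag_mat lam ** transpose V" by (rule orthogonal_eigenvector_matrix_diagonalizes[OF V])
  thus ?thesis using V by blast
qed

lemma orthogonal_diagonalization_apply_unique:
  fixes V W :: "real^'n::finite^'n"
  assumes V: "orthogonal_matrix V" and W: "orthogonal_matrix W"
    and eq: "V ** diag_mat l ** transpose V = W ** diag_mat m ** transpose W"
  shows "V ** diag_mat (h \<circ> l) ** transpose V = W ** diag_mat (h \<circ> m) ** transpose W"
proof -
  have VV: "transpose V ** V = mat 1" "V ** transpose V = mat 1"
    and WW: "transpose W ** W = mat 1" "W ** transpose W = mat 1"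
    using V W by (auto simp: orthogonal_matrix_def)
  define R where "R = transpose V ** W"
  have "transpose V ** (V ** diag_mat l ** transpose V) ** W = transpose V ** (W ** diag_mat m ** transpose W) ** W"
    using eq by simp
  hence DR: "diag_mat l ** R = R ** diag_mat m"
    unfolding R_def by (simp add: matrix_mul_assoc VV WW) (simp add: matrix_mul_assoc[symmetric] WW)
  \<comment> \<open>R intertwines diag l and diag m, so R i j \<noteq> 0 forces l i = m j, hence h (l i) = h (m j).\<close>
  have "(diag_mat (h \<circ> l) ** R) $ i $ j = (R ** diag_mat (h \<circ> m)) $ i $ j" for i j
  proof -
    have "l i * R $ i $ j = R $ i $ j * m j"
      using arg_cong[OF DR, of "\<lambda>M. M $ i $ j"] by (simp add: diag_mat_mult_left diag_mat_mult_right)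
    hence "R $ i $ j = 0 \<or> l i = m j" by auto
    thus ?thesis by (auto simp: diag_mat_mult_left diag_mat_mult_right)
  qed
  hence DR': "diag_mat (h \<circ> l) ** R = R ** diag_mat (h \<circ> m)" by (simp add: vec_eq_iff)
  have "V ** diag_mat (h \<circ> l) ** transpose V = V ** (diag_mat (h \<circ> l) ** R) ** transpose W"
    unfolding R_def by (simp add: matrix_mul_assoc[symmetric] WW)
  also have "\<dots> = (V ** R) ** diag_mat (h \<circ> m) ** transpose W" unfolding DR' by (simp add: matrix_mul_assoc)
  also have "V ** R = W" unfolding R_def by (simp add: matrix_mul_assoc VV)
  finally show ?thesis .
qed

lemma spectral_fun_eq:
  fixes A :: "real^'n::finite^'n"
  assumes "orthogonal_matrix V" "A = V ** diag_mat lam ** transpose V"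
  shows "spectral_fun h A = V ** diag_mat (h \<circ> lam) ** transpose V"
proof -
  have "\<exists>V' lam'. orthogonal_matrix V' \<and> A = V' ** diag_mat lam' ** transpose V'
      \<and> spectral_fun h A = V' ** diag_mat (h \<circ> lam') ** transpose V'"
    unfolding spectral_fun_def by (rule someI_ex) (use assms in blast)
  then obtain V' lam' where "orthogonal_matrix V'" "A = V' ** diag_mat lam' ** transpose V'"
    "spectral_fun h A = V' ** diag_mat (h \<circ> lam') ** transpose V'" by blast
  thus ?thesis using orthogonal_diagonalization_apply_unique[of V' V lam' lam h] assms by simp
qed

lemma spectral_fun_orthogonal_conj:
  fixes A Q :: "real^'n::finite^'n"
  assumes sym: "transpose A = A" and Q: "orthogonal_matrix Q"
  shows "spectral_fun h (Q ** A ** transpose Q) = Q ** spectral_fun h A ** transpose Q"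
proof -
  obtain V lam where V: "orthogonal_matrix V" "A = V ** diag_mat lam ** transpose V"
    using symmetric_matrix_orthogonally_diagonalizable[OF sym] by blast
  have "Q ** A ** transpose Q = (Q ** V) ** diag_mat lam ** transpose (Q ** V)"
    using V(2) by (simp add: matrix_transpose_mul matrix_mul_assoc)
  with orthogonal_matrix_mul[OF Q V(1)]
  have "spectral_fun h (Q ** A ** transpose Q) = (Q ** V) ** diag_mat (h \<circ> lam) ** transpose (Q ** V)"
    by (rule spectral_fun_eq)
  also have "\<dots> = Q ** (V ** diag_mat (h \<circ> lam) ** transpose V) ** transpose Q"
    by (simp add: matrix_transpose_mul matrix_mul_assoc)
  finally show ?thesis using spectral_fun_eq[OF V] by simp
qed

lemma linear_matrix_mult_both_sides:
  fixes A :: "real^'m::finite^'n::finite" and B :: "real^'q::finite^'p::finite"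
  shows "linear (\<lambda>C. A ** C ** B)"
  by (rule linearI)
    (simp_all add: vec_eq_iff matrix_matrix_mult_def sum.distrib distrib_left distrib_right
      sum_distrib_left mult_ac)

lemma conj_matrix_vector_mult:
  fixes Q Q' A :: "real^'n::finite^'n"
  assumes "Q' ** Q = mat 1"
  shows "(Q ** A ** Q') *v (Q *v y) = Q *v (A *v y)"
  by (simp add: matrix_vector_mul_assoc matrix_mul_assoc[symmetric] assms)

lemma eigenvalues_conj_subset:
  fixes Q Q' A :: "real^'n::finite^'n"
  assumes QQ': "Q' ** Q = mat 1"
  shows "eigenvalues A \<subseteq> eigenvalues (Q ** A ** Q')"
proof
  fix c assume "c \<in> eigenvalues A"
  then obtain v where v: "v \<noteq> 0" "A *v v = c *\<^sub>R v" unfolding eigenvalues_def by blast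
  have "Q' *v (Q *v v) = v" by (simp add: matrix_vector_mul_assoc QQ')
  hence "Q *v v \<noteq> 0" using v(1) by auto
  moreover have "(Q ** A ** Q') *v (Q *v v) = c *\<^sub>R (Q *v v)"
    by (simp add: conj_matrix_vector_mult[OF QQ'] v(2) matrix_vector_mult_scaleR)
  ultimately show "c \<in> eigenvalues (Q ** A ** Q')" unfolding eigenvalues_def by blast
qed

lemma eigenvalues_orthogonal_conj:
  fixes Q A :: "real^'n::finite^'n"
  assumes "orthogonal_matrix Q"
  shows "eigenvalues (Q ** A ** transpose Q) = eigenvalues A"
proof
  have QQ: "transpose Q ** Q = mat 1" "Q ** transpose Q = mat 1"
    using assms by (auto simp: orthogonal_matrix_def)
  have "transpose Q ** (Q ** A ** transpose Q) ** Q = A"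
    by (simp add: matrix_mul_assoc QQ) (simp add: matrix_mul_assoc[symmetric] QQ)
  thus "eigenvalues (Q ** A ** transpose Q) \<subseteq> eigenvalues A"
    using eigenvalues_conj_subset[of Q "transpose Q" "Q ** A ** transpose Q"] QQ(2) by simp
  show "eigenvalues A \<subseteq> eigenvalues (Q ** A ** transpose Q)"
    by (rule eigenvalues_conj_subset[OF QQ(1)])
qed

lemma column_matrix_mult: "column t (M ** X) = M *v column t X"
  by (simp add: vec_eq_iff column_def matrix_matrix_mult_def matrix_vector_mult_def)

lemma sample_mean_matrix_mult: "sample_mean (M ** X) = M *v sample_mean X"
  unfolding sample_mean_def column_matrix_mult
  by (simp add: linear_sum[OF matrix_vector_mul_linear] matrix_vector_mult_scaleR)

lemma outer_matrix_vector_mult: "outer (M *v u) (M *v v) = M ** outer u v ** transpose M"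
  by (simp add: vec_eq_iff outer_def matrix_matrix_mult_def matrix_vector_mult_def transpose_def
      sum_distrib_left sum_distrib_right mult_ac)

lemma sample_cov_matrix_mult: "sample_cov (M ** X) = M ** sample_cov X ** transpose M"
proof -
  interpret conj: linear "\<lambda>C. M ** C ** transpose M"
    by (rule linear_matrix_mult_both_sides)
  have "column t (M ** X) - sample_mean (M ** X) = M *v (column t X - sample_mean X)" for t
    by (simp add: column_matrix_mult sample_mean_matrix_mult matrix_vector_mult_diff_distrib)
  thus ?thesis
    unfolding sample_cov_def conj.scale conj.sum by (simp add: outer_matrix_vector_mult)
qed

lemma transpose_sample_cov: "transpose (sample_cov X) = sample_cov X"
  unfolding sample_cov_def by (simp add: vec_eq_iff transpose_def outer_def mult.commute)

lemma transpose_cov_operator: "transpose (cov_operator b \<gamma> X) = cov_operator b \<gamma> X"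
proof -
  have "sample_cov X $ j $ i = sample_cov X $ i $ j" for i j
    using arg_cong[OF transpose_sample_cov[of X], of "\<lambda>M. M $ i $ j"] by (simp add: transpose_def)
  thus ?thesis unfolding cov_operator_def Let_def by (simp add: vec_eq_iff transpose_def mat_def)
qed

lemma cov_operator_orthogonal_mult:
  fixes Q :: "real^'n::finite^'n" and X :: "real^'t::finite^'n"
  assumes Q: "orthogonal_matrix Q"
  shows "cov_operator b \<gamma> (Q ** X) = Q ** cov_operator b \<gamma> X ** transpose Q"
proof -
  interpret conj: linear "\<lambda>C. Q ** C ** transpose Q"
    by (rule linear_matrix_mult_both_sides)
  have "largest_eigenvalue (Q ** sample_cov X ** transpose Q) = largest_eigenvalue (sample_cov X)"
    unfolding largest_eigenvalue_def eigenvalues_orthogonal_conj[OF Q] ..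
  moreover have "Q ** mat 1 ** transpose Q = mat 1" using Q by (simp add: orthogonal_matrix_def)
  ultimately show ?thesis
    unfolding cov_operator_def Let_def sample_cov_matrix_mult by (simp add: conj.diff conj.scale)
qed

lemma scat_feature_intertwine:
  assumes H: "\<And>j y. H' j *v (Q *v y) = Q *v (H j *v y)"
    and \<rho>: "\<And>v. Q *v entrywise \<rho> v = entrywise \<rho> (Q *v v)"
  shows "scat_feature H' \<rho> js (Q *v x) = Q *v scat_feature H \<rho> js x"
  by (induction js) (simp_all add: H \<rho>)

lemma CST_orthogonal_mult:
  fixes Q :: "real^'n::finite^'n" and X :: "real^'t::finite^'n"
  assumes Q: "orthogonal_matrix Q" and \<rho>: "\<And>v. Q *v entrywise \<rho> v = entrywise \<rho> (Q *v v)"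
  shows "CST b \<gamma> (Q ** X) h J L \<rho> U (Q *v x) = CST b \<gamma> X h J L \<rho> (\<lambda>y. U (Q *v y)) x"
proof -
  have QQ: "transpose Q ** Q = mat 1" using Q by (simp add: orthogonal_matrix_def)
  have "spectral_fun (h j) (cov_operator b \<gamma> (Q ** X))
      = Q ** spectral_fun (h j) (cov_operator b \<gamma> X) ** transpose Q" for j
    unfolding cov_operator_orthogonal_mult[OF Q]
    by (rule spectral_fun_orthogonal_conj[OF transpose_cov_operator Q])
  hence "scat_feature (\<lambda>j. spectral_fun (h j) (cov_operator b \<gamma> (Q ** X))) \<rho> js (Q *v x)
      = Q *v scat_feature (\<lambda>j. spectral_fun (h j) (cov_operator b \<gamma> X)) \<rho> js x" for js
    by (intro scat_feature_intertwine \<rho>) (simp add: conj_matrix_vector_mult[OF QQ])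
  thus ?thesis unfolding CST_def Let_def by simp
qed

lemma perm_matrix_eq_inv:
  assumes "p permutes (UNIV :: 'n::finite set)"
  shows "perm_matrix p $ i $ j = (if inv p i = j then 1 else 0 :: real)"
  unfolding perm_matrix_def using permutes_inv_eq[OF assms] by auto

lemma perm_matrix_vector_mult:
  assumes "p permutes (UNIV :: 'n::finite set)"
  shows "(perm_matrix p *v x) $ i = x $ inv p i"
  by (simp add: matrix_vector_mult_def perm_matrix_eq_inv[OF assms] if_distrib[where f="\<lambda>z. z * _"]
      cong: if_cong)

lemma orthogonal_matrix_perm_matrix:
  assumes p: "p permutes (UNIV :: 'n::finite set)"
  shows "orthogonal_matrix (perm_matrix p :: real^'n^'n)"
proof -
  have "(perm_matrix p ** transpose (perm_matrix p)) $ i $ j = (mat 1 :: real^'n^'n) $ i $ j" for i j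
    by (simp add: matrix_matrix_mult_def transpose_def perm_matrix_eq_inv[OF p] mat_def
        inj_eq[OF permutes_inj[OF permutes_inv[OF p]]] if_distrib[where f="\<lambda>z. z * _"] cong: if_cong)
  hence "perm_matrix p ** transpose (perm_matrix p) = (mat 1 :: real^'n^'n)" by (simp add: vec_eq_iff)
  thus ?thesis by (simp add: orthogonal_matrix_def matrix_left_right_inverse)
qed

lemma perm_matrix_entrywise:
  assumes "p permutes (UNIV :: 'n::finite set)"
  shows "perm_matrix p *v entrywise \<rho> v = entrywise \<rho> (perm_matrix p *v (v :: real^'n))"
  by (simp add: vec_eq_iff perm_matrix_vector_mult[OF assms] entrywise_def)

theorem theorem1:
  fixes X :: "real^'t::finite^'n::finite"
    and P :: "real^'n^'n"
    and b :: bool and \<gamma> :: real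
    and h :: "nat \<Rightarrow> real \<Rightarrow> real" and J L :: nat
    and \<rho> :: "real \<Rightarrow> real"
    and U1 :: "real^'n \<Rightarrow> real^'n"
    and U2 :: "real^'n \<Rightarrow> 'm"
    and x :: "real^'n"
  assumes "\<gamma> > 0"
    and "largest_eigenvalue (sample_cov X) > 0"
    and "is_permutation_matrix P"
  shows "((\<forall>Q y. is_permutation_matrix Q \<longrightarrow> U1 (Q *v y) = Q *v U1 y) \<longrightarrow>
           CST b \<gamma> (P ** X) h J L \<rho> U1 (P *v x) = cst_perm (CST b \<gamma> X h J L \<rho> U1 x) P)
       \<and> ((\<forall>Q y. is_permutation_matrix Q \<longrightarrow> U2 (Q *v y) = U2 y) \<longrightarrow>
           CST b \<gamma> (P ** X) h J L \<rho> U2 (P *v x) = CST b \<gamma> X h J L \<rho> U2 x)"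
proof -
  obtain p where p: "p permutes (UNIV :: 'n set)" and P: "P = perm_matrix p"
    using assms(3) unfolding is_permutation_matrix_def by blast
  have CST_P: "CST b \<gamma> (P ** X) h J L \<rho> U (P *v x) = CST b \<gamma> X h J L \<rho> (\<lambda>y. U (P *v y)) x"
    for U :: "real^'n \<Rightarrow> 'a"
    unfolding P by (intro CST_orthogonal_mult orthogonal_matrix_perm_matrix perm_matrix_entrywise p)
  show ?thesis
  proof (intro conjI impI)
    assume "\<forall>Q y. is_permutation_matrix Q \<longrightarrow> U1 (Q *v y) = Q *v U1 y"
    hence U1: "(\<lambda>y. U1 (P *v y)) = (\<lambda>y. P *v U1 y)" using assms(3) by simp
    show "CST b \<gamma> (P ** X) h J L \<rho> U1 (P *v x) = cst_perm (CST b \<gamma> X h J L \<rho> U1 x) P"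
      unfolding CST_P U1 by (simp add: CST_def cst_perm_def)
  next
    assume "\<forall>Q y. is_permutation_matrix Q \<longrightarrow> U2 (Q *v y) = U2 y"
    hence U2: "(\<lambda>y. U2 (P *v y)) = U2" using assms(3) by simp
    show "CST b \<gamma> (P ** X) h J L \<rho> U2 (P *v x) = CST b \<gamma> X h J L \<rho> U2 x"
      unfolding CST_P U2 ..
  qed
qed

end
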